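(* Let $G=(V,E,C,\ell)$ be an edge-labeled hypergraph with maximum hyperedge size $r$. Construct an undirected weighted graph $G'$ on node set $V'=V\cup\{v_c: c\in C\}$ (one new terminal node per category) as follows: for each hyperedge $e\in E$, add a clique on the nodes of $e$ together with the terminal $v_{\ell(e)}$, each clique edge having weight $1/|e|$; weights of overlapping edges are added. For a clustering $Y:V\to C$, let $\mathrm{MultiwayCut}(Y)$ be the total weight of edges of $G'$ whose endpoints lie in different parts of the partition of $V'$ into the $|C|$ sets $\{v_c\}\cup Y^{-1}(c)$, $c\in C$. Then for every clustering $Y$, \[ \mathrm{CatEdgeClus}(Y)\le \mathrm{MultiwayCut}(Y)\le \frac{r+1}{2}\,\mathrm{CatEdgeClus}(Y). \]
   Context: An edge-labeled hypergraph $G=(V,E,C,\ell)$ consists of a finite node set $V$, a finite collection $E$ of hyperedges (nonempty subsets of $V$), a finite set $C$ of categories, and a labeling $\ell:E\to C$. A clustering is a map $Y:V\to C$. For $e\in E$, $m_Y(e)=1$ if $Y[i]\neq\ell(e)$ for some $i\in e$, and $m_Y(e)=0$ otherwise; $\mathrm{CatEdgeClus}(Y)=\sum_{e\in E}m_Y(e)$. *)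

theory Defs
  imports Complex_Main
begin

text \<open>Edge-labeled hypergraph: node set V, hyperedge index set E (so repeated
hyperedges are allowed), hyperedge map hedge, categories C, labels lab.\<close>

definition is_edge_labeled_hypergraph ::
  "'v set \<Rightarrow> 'e set \<Rightarrow> ('e \<Rightarrow> 'v set) \<Rightarrow> 'c set \<Rightarrow> ('e \<Rightarrow> 'c) \<Rightarrow> bool" where
  "is_edge_labeled_hypergraph V E hedge C lab \<longleftrightarrow>
     finite V \<and> finite E \<and> finite C \<and>
     (\<forall>e\<in>E. hedge e \<noteq> {} \<and> hedge e \<subseteq> V \<and> lab e \<in> C)"

definition is_clustering :: "'v set \<Rightarrow> 'c set \<Rightarrow> ('v \<Rightarrow> 'c) \<Rightarrow> bool" where
  "is_clustering V C Y \<longleftrightarrow> (\<forall>v\<in>V. Y v \<in> C)"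

definition mistake :: "('e \<Rightarrow> 'v set) \<Rightarrow> ('e \<Rightarrow> 'c) \<Rightarrow> ('v \<Rightarrow> 'c) \<Rightarrow> 'e \<Rightarrow> nat" where
  "mistake hedge lab Y e = (if \<exists>i\<in>hedge e. Y i \<noteq> lab e then 1 else 0)"

definition CatEdgeClus ::
  "'e set \<Rightarrow> ('e \<Rightarrow> 'v set) \<Rightarrow> ('e \<Rightarrow> 'c) \<Rightarrow> ('v \<Rightarrow> 'c) \<Rightarrow> nat" where
  "CatEdgeClus E hedge lab Y = (\<Sum>e\<in>E. mistake hedge lab Y e)"

text \<open>Graph G': node set V' = Inl ` V \<union> Inr ` C (Inr c is the terminal v_c).\<close>

definition node_set' :: "'v set \<Rightarrow> 'c set \<Rightarrow> ('v + 'c) set" where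
  "node_set' V C = Inl ` V \<union> Inr ` C"

definition clique_nodes :: "('e \<Rightarrow> 'v set) \<Rightarrow> ('e \<Rightarrow> 'c) \<Rightarrow> 'e \<Rightarrow> ('v + 'c) set" where
  "clique_nodes hedge lab e = Inl ` hedge e \<union> {Inr (lab e)}"

definition weight' :: "'e set \<Rightarrow> ('e \<Rightarrow> 'v set) \<Rightarrow> ('e \<Rightarrow> 'c) \<Rightarrow> ('v + 'c) set \<Rightarrow> real" where
  "weight' E hedge lab p =
     (\<Sum>e\<in>E. if p \<subseteq> clique_nodes hedge lab e then 1 / real (card (hedge e)) else 0)"

fun part' :: "('v \<Rightarrow> 'c) \<Rightarrow> ('v + 'c) \<Rightarrow> 'c" where
  "part' Y (Inl v) = Y v"
| "part' Y (Inr c) = c"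

definition cut_pairs :: "'v set \<Rightarrow> 'c set \<Rightarrow> ('v \<Rightarrow> 'c) \<Rightarrow> ('v + 'c) set set" where
  "cut_pairs V C Y = {{x, y} | x y. x \<in> node_set' V C \<and> y \<in> node_set' V C \<and> x \<noteq> y
                                  \<and> part' Y x \<noteq> part' Y y}"

definition MultiwayCut ::
  "'v set \<Rightarrow> 'e set \<Rightarrow> ('e \<Rightarrow> 'v set) \<Rightarrow> 'c set \<Rightarrow> ('e \<Rightarrow> 'c) \<Rightarrow> ('v \<Rightarrow> 'c) \<Rightarrow> real" where
  "MultiwayCut V E hedge C lab Y = (\<Sum>p\<in>cut_pairs V C Y. weight' E hedge lab p)"

end

theory Submission
  imports Defs
begin

text \<open>The multiway cut splits into one contribution per hyperedge e: the cut pairs inside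
  the clique of e, each weighted 1/|e|. If e is not a mistake, the whole clique lies in the
  part of lab e and nothing is cut. If e is a mistake, some node i of e lies outside that
  part; then every node v of e lies in a distinct cut pair, namely with the terminal of lab e
  if v is outside the part, and with i otherwise. So between |e| and (|e|+1) choose 2 of the
  clique pairs are cut, and the contribution of e lies between 1 and (|e|+1)/2 \<le> (r+1)/2.\<close>

definition clique_cut_pairs ::
  "'v set \<Rightarrow> 'c set \<Rightarrow> ('v \<Rightarrow> 'c) \<Rightarrow> ('e \<Rightarrow> 'v set) \<Rightarrow> ('e \<Rightarrow> 'c) \<Rightarrow> 'e \<Rightarrow> ('v + 'c) set set"
  where "clique_cut_pairs V C Y hedge lab e = {p \<in> cut_pairs V C Y. p \<subseteq> clique_nodes hedge lab e}"

lemma card_clique_nodes: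
  assumes "finite (hedge e)"
  shows "card (clique_nodes hedge lab e) = card (hedge e) + 1"
  using assms by (simp add: clique_nodes_def card_insert_if card_image image_iff)

lemma finite_cut_pairs:
  assumes "finite V" "finite C"
  shows "finite (cut_pairs V C Y)"
proof (rule finite_subset)
  show "cut_pairs V C Y \<subseteq> Pow (node_set' V C)"
    unfolding cut_pairs_def by auto
  show "finite (Pow (node_set' V C))"
    using assms by (simp add: node_set'_def)
qed

lemma MultiwayCut_eq_sum_clique_cut_pairs:
  assumes "finite V" "finite C"
  shows "MultiwayCut V E hedge C lab Y =
    (\<Sum>e\<in>E. real (card (clique_cut_pairs V C Y hedge lab e)) / real (card (hedge e)))"
proof -
  have "MultiwayCut V E hedge C lab Y = (\<Sum>e\<in>E. \<Sum>p\<in>cut_pairs V C Y.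
      if p \<subseteq> clique_nodes hedge lab e then 1 / real (card (hedge e)) else 0)"
    unfolding MultiwayCut_def weight'_def by (rule sum.swap)
  also have "\<dots> = (\<Sum>e\<in>E. real (card (clique_cut_pairs V C Y hedge lab e)) / real (card (hedge e)))"
    unfolding clique_cut_pairs_def sum.inter_filter[OF finite_cut_pairs[OF assms], symmetric]
    by simp
  finally show ?thesis .
qed

lemma clique_cut_pairs_empty_if_no_mistake:
  assumes "mistake hedge lab Y e = 0"
  shows "clique_cut_pairs V C Y hedge lab e = {}"
  using assms
  by (fastforce simp: mistake_def clique_cut_pairs_def cut_pairs_def clique_nodes_def split: if_splits)

lemma card_clique_cut_pairs_le:
  assumes "finite (hedge e)"
  shows "card (clique_cut_pairs V C Y hedge lab e) \<le> (card (hedge e) + 1) choose 2"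
proof -
  let ?K = "clique_nodes hedge lab e"
  have fin_K: "finite ?K"
    using assms by (simp add: clique_nodes_def)
  have "clique_cut_pairs V C Y hedge lab e \<subseteq> {p. p \<subseteq> ?K \<and> card p = 2}"
    unfolding clique_cut_pairs_def cut_pairs_def by auto
  then have "card (clique_cut_pairs V C Y hedge lab e) \<le> card {p. p \<subseteq> ?K \<and> card p = 2}"
    using fin_K by (intro card_mono) simp_all
  also have "\<dots> = (card (hedge e) + 1) choose 2"
    using fin_K assms by (simp add: n_subsets card_clique_nodes)
  finally show ?thesis .
qed

lemma card_hedge_le_card_clique_cut_pairs:
  assumes "finite V" "finite C" "hedge e \<subseteq> V" "lab e \<in> C"
    and "mistake hedge lab Y e = 1"
  shows "card (hedge e) \<le> card (clique_cut_pairs V C Y hedge lab e)"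
proof -
  obtain i where i: "i \<in> hedge e" "Y i \<noteq> lab e"
    using assms(5) by (auto simp: mistake_def split: if_splits)
  define partner where "partner v = (if Y v \<noteq> lab e then Inr (lab e) else Inl i)" for v
  have "inj_on (\<lambda>v. {Inl v, partner v}) (hedge e)"
    using i by (intro inj_onI) (auto simp: partner_def doubleton_eq_iff split: if_splits)
  moreover have "(\<lambda>v. {Inl v, partner v}) ` hedge e \<subseteq> clique_cut_pairs V C Y hedge lab e"
    using assms(3,4) i
    by (fastforce simp: partner_def clique_cut_pairs_def cut_pairs_def clique_nodes_def node_set'_def)
  moreover have "finite (clique_cut_pairs V C Y hedge lab e)"
    using finite_cut_pairs[OF assms(1,2)] by (simp add: clique_cut_pairs_def)
  ultimately show ?thesis
    by (rule card_inj_on_le)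
qed

lemma clique_cut_weight_bounds:
  fixes Y :: "'v \<Rightarrow> 'c"
  assumes "finite V" "finite C" "hedge e \<subseteq> V" "hedge e \<noteq> {}" "lab e \<in> C"
    and "card (hedge e) \<le> r"
  defines "w \<equiv> real (card (clique_cut_pairs V C Y hedge lab e)) / real (card (hedge e))"
  shows "real (mistake hedge lab Y e) \<le> w \<and> w \<le> (real r + 1) / 2 * real (mistake hedge lab Y e)"
proof (cases "mistake hedge lab Y e = 0")
  case True
  then have "clique_cut_pairs V C Y hedge lab e = {}"
    by (rule clique_cut_pairs_empty_if_no_mistake)
  then show ?thesis
    using True by (simp add: w_def)
next
  case False
  then have mistake: "mistake hedge lab Y e = 1"
    by (simp add: mistake_def split: if_splits)
  let ?k = "card (hedge e)" and ?n = "card (clique_cut_pairs V C Y hedge lab e)"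
  have fin: "finite (hedge e)"
    using assms(1,3) finite_subset by blast
  then have k_pos: "real ?k > 0"
    using assms(4) by (simp add: card_gt_0_iff)
  have "?k \<le> ?n"
    using card_hedge_le_card_clique_cut_pairs[OF assms(1,2,3,5) mistake] .
  then have lower: "1 \<le> w"
    using k_pos by (simp add: w_def le_divide_eq)
  have "2 * ?n \<le> (?k + 1) * ?k"
    using card_clique_cut_pairs_le[of hedge e V C Y lab, OF fin] by (simp add: choose_two)
  then have "real (2 * ?n) \<le> real ((?k + 1) * ?k)"
    by (rule of_nat_mono)
  then have "2 * real ?n \<le> (real ?k + 1) * real ?k"
    by (simp only: of_nat_mult of_nat_add of_nat_1 of_nat_numeral)
  also have "\<dots> \<le> (real r + 1) * real ?k"
    using assms(6) k_pos by (intro mult_right_mono) auto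
  finally have upper: "w \<le> (real r + 1) / 2"
    using k_pos by (simp add: w_def divide_le_eq)
  show ?thesis
    using mistake lower upper by simp
qed

theorem mainTheorem7:
  fixes V :: "'v set" and E :: "'e set" and hedge :: "'e \<Rightarrow> 'v set"
    and C :: "'c set" and lab :: "'e \<Rightarrow> 'c" and Y :: "'v \<Rightarrow> 'c" and r :: nat
  assumes "is_edge_labeled_hypergraph V E hedge C lab"
    and "r = Max ((\<lambda>e. card (hedge e)) ` E)"
    and "is_clustering V C Y"
  shows "real (CatEdgeClus E hedge lab Y) \<le> MultiwayCut V E hedge C lab Y
       \<and> MultiwayCut V E hedge C lab Y \<le> (real r + 1) / 2 * real (CatEdgeClus E hedge lab Y)"
proof -
  have fin: "finite V" "finite E" "finite C"
    and edge: "\<And>e. e \<in> E \<Longrightarrow> hedge e \<noteq> {} \<and> hedge e \<subseteq> V \<and> lab e \<in> C"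
    using assms(1) unfolding is_edge_labeled_hypergraph_def by auto
  have "\<And>e. e \<in> E \<Longrightarrow> card (hedge e) \<le> r"
    using assms(2) fin(2) by simp
  then have bounds: "\<And>e. e \<in> E \<Longrightarrow>
      real (mistake hedge lab Y e) \<le> real (card (clique_cut_pairs V C Y hedge lab e)) / real (card (hedge e))
    \<and> real (card (clique_cut_pairs V C Y hedge lab e)) / real (card (hedge e))
        \<le> (real r + 1) / 2 * real (mistake hedge lab Y e)"
    using edge fin by (intro clique_cut_weight_bounds) auto
  have CatEdgeClus_eq: "real (CatEdgeClus E hedge lab Y) = (\<Sum>e\<in>E. real (mistake hedge lab Y e))"
    by (simp add: CatEdgeClus_def)
  show ?thesis
    unfolding CatEdgeClus_eq MultiwayCut_eq_sum_clique_cut_pairs[OF fin(1,3)] sum_distrib_left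
    using bounds by (auto intro: sum_mono)
qed

end
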